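(* Let $d\ge 1$ be an integer and for each subset $J\subseteq[d]$ let $Q_J\in\mathbb{R}^{d-1}$ be a point. Then there is an index $i\in[d]$ such that \[ \operatorname{conv}\{Q_J: J\subseteq[d],\ i\in J\}\cap\operatorname{conv}\{Q_J: J\subseteq[d],\ i\notin J\}\neq\emptyset. \]
   Context: $[d]=\{1,\dots,d\}$. *)

theory Defs
  imports "HOL-Analysis.Analysis"
begin

end

theory Submission
  imports Defs
begin

text \<open>Suppose the two hulls are disjoint for every \<open>i\<close>. Separating them by hyperplanes
  \<open>a\<^sub>i \<bullet> x = b\<^sub>i\<close> with normals in the ambient \<open>(d-1)\<close>-dimensional subspace gives \<open>d\<close> normals, which
  satisfy a nontrivial relation \<open>\<Sum>i. l\<^sub>i a\<^sub>i = 0\<close>. Hence \<open>\<Sum>i. l\<^sub>i (a\<^sub>i \<bullet> x - b\<^sub>i)\<close> does not depend on \<open>x\<close>.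
  Evaluated at \<open>Q\<^sub>J\<close> for \<open>J = {i. l\<^sub>i > 0}\<close> every summand is \<open>\<le> 0\<close> and one is \<open>< 0\<close>; evaluated at
  \<open>J = {i. l\<^sub>i < 0}\<close> the sum is positive for the same reason, a contradiction.\<close>

lemma nontrivial_linear_relation_if_dim_less_card:
  fixes p :: "'i \<Rightarrow> 'a::euclidean_space"
  assumes "finite I" and "\<And>i. i \<in> I \<Longrightarrow> p i \<in> S" and "dim S < card I"
  obtains l i where "(\<Sum>i\<in>I. l i *\<^sub>R p i) = 0" and "i \<in> I" and "l i \<noteq> 0"
proof (cases "inj_on p I")
  case False
  then obtain i j where ij: "i \<in> I" "j \<in> I" "i \<noteq> j" "p i = p j"
    unfolding inj_on_def by blast
  define l where "l k = (if k = i then 1 else if k = j then -1 else (0::real))" for k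
  have "l k *\<^sub>R p k = (if k = i then p i else 0) + (if k = j then - p j else 0)" for k
    using ij by (auto simp: l_def)
  then have "(\<Sum>k\<in>I. l k *\<^sub>R p k) = p i - p j"
    using ij assms(1) by (simp add: sum.distrib)
  with ij show ?thesis
    by (intro that[of l i]) (auto simp: l_def)
next
  case True
  have "dependent (p ` I)"
  proof (rule ccontr)
    assume "\<not> dependent (p ` I)"
    then have "card (p ` I) \<le> dim S"
      using assms(2) by (intro independent_card_le_dim) auto
    with True assms(3) show False
      by (simp add: card_image)
  qed
  then obtain u v where "v \<in> p ` I" "u v \<noteq> 0" "(\<Sum>v\<in>p ` I. u v *\<^sub>R v) = 0"
    using dependent_finite[of "p ` I"] assms(1) by blast
  moreover from \<open>v \<in> p ` I\<close> obtain i where "i \<in> I" and "v = p i"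
    by blast
  ultimately show ?thesis
    using True by (intro that[of "u \<circ> p" i]) (auto simp: sum.reindex)
qed

lemma exists_inner_representative_in_subspace:
  fixes a :: "'a::euclidean_space"
  assumes "subspace S"
  obtains p where "p \<in> S" and "\<And>x. x \<in> S \<Longrightarrow> a \<bullet> x = p \<bullet> x"
proof -
  obtain p z where p: "p \<in> span S" and z: "\<And>w. w \<in> span S \<Longrightarrow> orthogonal z w" and "a = p + z"
    using orthogonal_subspace_decomp_exists by blast
  then have "a \<bullet> x = p \<bullet> x" if "x \<in> S" for x
    using that span_base by (auto simp: orthogonal_def inner_add_left)
  with p assms show ?thesis
    using that span_eq_iff by metis
qed

lemma separating_hyperplane_finite_in_subspace:
  fixes A B :: "'a::euclidean_space set"
  assumes "subspace S" and "A \<subseteq> S" and "B \<subseteq> S" and "finite A" and "finite B"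
    and "convex hull A \<inter> convex hull B = {}"
  obtains a b where "a \<in> S" and "\<And>x. x \<in> A \<Longrightarrow> a \<bullet> x < b" and "\<And>x. x \<in> B \<Longrightarrow> b < a \<bullet> x"
proof (cases "B = {}")
  case True
  with subspace_0[OF assms(1)] show ?thesis
    by (intro that[of 0 1]) auto
next
  case False
  have "\<exists>c b. (\<forall>x\<in>convex hull A. c \<bullet> x < b) \<and> (\<forall>x\<in>convex hull B. b < c \<bullet> x)"
    using False assms(4-6)
    by (intro separating_hyperplane_closed_compact) (auto simp: compact_imp_closed finite_imp_compact_convex_hull)
  then obtain c b where sep: "\<And>x. x \<in> convex hull A \<Longrightarrow> c \<bullet> x < b" "\<And>x. x \<in> convex hull B \<Longrightarrow> b < c \<bullet> x"
    by blast
  obtain a where "a \<in> S" and a: "\<And>x. x \<in> S \<Longrightarrow> c \<bullet> x = a \<bullet> x"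
    using exists_inner_representative_in_subspace assms(1) by blast
  show ?thesis
  proof (rule that)
    show "a \<in> S"
      by fact
    show "a \<bullet> x < b" if "x \<in> A" for x
      using sep(1)[OF hull_inc] a assms(2) that by fastforce
    show "b < a \<bullet> x" if "x \<in> B" for x
      using sep(2)[OF hull_inc] a assms(3) that by fastforce
  qed
qed

lemma sum_mult_neg_if_opposite_signs:
  fixes l g :: "'i \<Rightarrow> real"
  assumes "finite I" and "i \<in> I" and "l i \<noteq> 0"
    and "\<And>j. j \<in> I \<Longrightarrow> 0 < l j \<Longrightarrow> g j < 0" and "\<And>j. j \<in> I \<Longrightarrow> l j < 0 \<Longrightarrow> 0 < g j"
  shows "(\<Sum>j\<in>I. l j * g j) < 0"
proof -
  have "l j * g j \<le> 0" if "j \<in> I" for j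
    using assms(4,5)[OF that] by (cases "l j" "0::real" rule: linorder_cases)
      (auto simp: mult_le_0_iff)
  moreover have "l i * g i < 0"
    using assms(3) assms(4,5)[OF assms(2)] by (cases "l i" "0::real" rule: linorder_cases)
      (auto simp: mult_less_0_iff)
  ultimately have "(\<Sum>j\<in>I. l j * g j) < (\<Sum>j\<in>I. 0)"
    using assms(1,2) by (intro sum_strict_mono_ex1) auto
  then show ?thesis
    by simp
qed

lemma normals_relation_trivial_if_all_cells_met:
  fixes a :: "'i \<Rightarrow> 'a::real_inner" and Q :: "'i set \<Rightarrow> 'a"
  assumes "finite I"
    and below: "\<And>J i. J \<subseteq> I \<Longrightarrow> i \<in> J \<Longrightarrow> a i \<bullet> Q J < b i"
    and above: "\<And>J i. J \<subseteq> I \<Longrightarrow> i \<in> I \<Longrightarrow> i \<notin> J \<Longrightarrow> b i < a i \<bullet> Q J"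
    and relation: "(\<Sum>i\<in>I. l i *\<^sub>R a i) = 0"
    and "i \<in> I"
  shows "l i = 0"
proof (rule ccontr)
  assume "l i \<noteq> 0"
  define c where "c = (\<Sum>j\<in>I. l j * b j)"
  have const: "(\<Sum>j\<in>I. l j * (a j \<bullet> Q J - b j)) = - c" for J
  proof -
    have "(\<Sum>j\<in>I. l j * (a j \<bullet> Q J)) = (\<Sum>j\<in>I. l j *\<^sub>R a j) \<bullet> Q J"
      by (simp add: inner_sum_left)
    also have "\<dots> = 0"
      using relation by simp
    finally show ?thesis
      by (simp add: c_def right_diff_distrib sum_subtractf)
  qed
  define pos neg where "pos = {j \<in> I. 0 < l j}" and "neg = {j \<in> I. l j < 0}"
  have "(\<Sum>j\<in>I. l j * (a j \<bullet> Q pos - b j)) < 0"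
    using \<open>l i \<noteq> 0\<close> assms(1,5) below[of pos] above[of pos]
    by (intro sum_mult_neg_if_opposite_signs) (auto simp: pos_def)
  moreover have "(\<Sum>j\<in>I. - l j * (a j \<bullet> Q neg - b j)) < 0"
    using \<open>l i \<noteq> 0\<close> assms(1,5) below[of neg] above[of neg]
    by (intro sum_mult_neg_if_opposite_signs) (auto simp: neg_def)
  ultimately show False
    using const[of pos] const[of neg] by (simp add: sum_negf)
qed

theorem lemma6:
  fixes d :: nat and Q :: "nat set \<Rightarrow> 'a::euclidean_space" and S :: "'a set"
  assumes "d \<ge> 1"
    and "subspace S" and "dim S = d - 1"
    and "\<forall>J. J \<subseteq> {1..d} \<longrightarrow> Q J \<in> S"
  shows "\<exists>i\<in>{1..d}.
           convex hull {Q J | J. J \<subseteq> {1..d} \<and> i \<in> J}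
           \<inter> convex hull {Q J | J. J \<subseteq> {1..d} \<and> i \<notin> J} \<noteq> {}"
proof (rule ccontr)
  let ?D = "{1..d}"
  let ?points = "\<lambda>P. {Q J | J. J \<subseteq> ?D \<and> P J}"
  assume disjoint: "\<not> ?thesis"
  have "\<exists>a b. a \<in> S \<and> (\<forall>J. J \<subseteq> ?D \<longrightarrow> i \<in> J \<longrightarrow> a \<bullet> Q J < b)
      \<and> (\<forall>J. J \<subseteq> ?D \<longrightarrow> i \<notin> J \<longrightarrow> b < a \<bullet> Q J)"
    if "i \<in> ?D" for i
  proof -
    have sub: "?points P \<subseteq> S" for P
      using assms(4) by blast
    have fin: "finite (?points P)" for P
      by (rule finite_subset[of _ "Q ` Pow ?D"]) auto
    have hulls_disjoint: "convex hull ?points (\<lambda>J. i \<in> J) \<inter> convex hull ?points (\<lambda>J. i \<notin> J) = {}"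
      using disjoint that by blast
    obtain a b where "a \<in> S"
      and "\<And>x. x \<in> ?points (\<lambda>J. i \<in> J) \<Longrightarrow> a \<bullet> x < b"
      and "\<And>x. x \<in> ?points (\<lambda>J. i \<notin> J) \<Longrightarrow> b < a \<bullet> x"
      using separating_hyperplane_finite_in_subspace[OF assms(2) sub[of "\<lambda>J. i \<in> J"]
          sub[of "\<lambda>J. i \<notin> J"] fin fin hulls_disjoint] by blast
    then show ?thesis
      by blast
  qed
  then obtain a b where a: "\<And>i. i \<in> ?D \<Longrightarrow> a i \<in> S"
    and sep: "\<And>i. i \<in> ?D \<Longrightarrow> (\<forall>J. J \<subseteq> ?D \<longrightarrow> i \<in> J \<longrightarrow> a i \<bullet> Q J < b i)
      \<and> (\<forall>J. J \<subseteq> ?D \<longrightarrow> i \<notin> J \<longrightarrow> b i < a i \<bullet> Q J)"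
    by metis
  have below: "a i \<bullet> Q J < b i" if "J \<subseteq> ?D" and "i \<in> J" for J i
    using sep[of i] that by blast
  have above: "b i < a i \<bullet> Q J" if "J \<subseteq> ?D" and "i \<in> ?D" and "i \<notin> J" for J i
    using sep[of i] that by blast
  have "dim S < card ?D"
    using assms(1,3) by simp
  then obtain l i where relation: "(\<Sum>i\<in>?D. l i *\<^sub>R a i) = 0" and "i \<in> ?D" and "l i \<noteq> 0"
    using nontrivial_linear_relation_if_dim_less_card[of ?D a S] a by blast
  moreover have "l i = 0"
    using normals_relation_trivial_if_all_cells_met[OF finite_atLeastAtMost below above relation \<open>i \<in> ?D\<close>] .
  ultimately show False
    by blast
qed

end
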